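(* Let $G$ be a non-amenable group and let $H$ be an amenable normal subgroup of $G$. Then $\mathcal{T}(G/H)=\mathcal{T}(G)$.
   Context: A group $G$ admits a paradoxical decomposition if there exist positive integers $m,n$, pairwise disjoint subsets $P_1,\ldots,P_m,Q_1,\ldots,Q_n$ of $G$ and elements $g_1,\ldots,g_m,h_1,\ldots,h_n\in G$ such that $G=\bigcup_{i=1}^m P_ig_i=\bigcup_{j=1}^n Q_jh_j$; this happens if and only if $G$ is non-amenable. For a non-amenable group $G$, the Tarski number $\mathcal{T}(G)$ is the minimal value of $m+n$ over all paradoxical decompositions of $G$. *)

theory Defs
  imports "HOL-Algebra.Algebra"
begin

definition paradoxical_decomposition :: "('a, 'b) monoid_scheme \<Rightarrow> nat \<Rightarrow> nat \<Rightarrow> bool" where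
  "paradoxical_decomposition G m n \<longleftrightarrow> 0 < m \<and> 0 < n \<and>
    (\<exists>(P :: nat \<Rightarrow> 'a set) (Q :: nat \<Rightarrow> 'a set) (g :: nat \<Rightarrow> 'a) (h :: nat \<Rightarrow> 'a).
       (\<forall>i<m. P i \<subseteq> carrier G \<and> g i \<in> carrier G) \<and>
       (\<forall>j<n. Q j \<subseteq> carrier G \<and> h j \<in> carrier G) \<and>
       (\<forall>i<m. \<forall>i'<m. i \<noteq> i' \<longrightarrow> P i \<inter> P i' = {}) \<and>
       (\<forall>j<n. \<forall>j'<n. j \<noteq> j' \<longrightarrow> Q j \<inter> Q j' = {}) \<and>
       (\<forall>i<m. \<forall>j<n. P i \<inter> Q j = {}) \<and>
       carrier G = (\<Union>i<m. P i #>\<^bsub>G\<^esub> g i) \<and>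
       carrier G = (\<Union>j<n. Q j #>\<^bsub>G\<^esub> h j))"

definition amenable :: "('a, 'b) monoid_scheme \<Rightarrow> bool" where
  "amenable G \<longleftrightarrow> (\<exists>\<mu> :: 'a set \<Rightarrow> real.
      (\<forall>A. A \<subseteq> carrier G \<longrightarrow> 0 \<le> \<mu> A) \<and>
      \<mu> (carrier G) = 1 \<and>
      (\<forall>A B. A \<subseteq> carrier G \<longrightarrow> B \<subseteq> carrier G \<longrightarrow> A \<inter> B = {} \<longrightarrow>
              \<mu> (A \<union> B) = \<mu> A + \<mu> B) \<and>
      (\<forall>g\<in>carrier G. \<forall>A. A \<subseteq> carrier G \<longrightarrow> \<mu> (A #>\<^bsub>G\<^esub> g) = \<mu> A))"

definition tarski_number :: "('a, 'b) monoid_scheme \<Rightarrow> nat" where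
  "tarski_number G = (LEAST k. \<exists>m n. m + n = k \<and> paradoxical_decomposition G m n)"

end

theory Submission
  imports Defs "HOL-Analysis.Function_Topology"
begin

text \<open>
  A paradoxical decomposition of a group \<open>K\<close> with \<open>m + n\<close> pieces is the same thing as an injection
  of two copies of \<open>K\<close> into \<open>K\<close> which moves every point of the first copy by one of \<open>m\<close> fixed
  right translations and every point of the second copy by one of \<open>n\<close> fixed right translations.
  Such an injection for \<open>G/H\<close> lifts to \<open>G\<close> by choosing coset representatives. Conversely, an
  injection for \<open>G\<close> yields one for \<open>G/H\<close> through Hall's marriage theorem, applied to the pairs
  (copy, coset), each of which may be sent to any of its finitely many translates. The Hall
  condition comes from amenability of \<open>H\<close>: transporting the invariant mean of \<open>H\<close> to all cosets,
  the injection maps the cosets of a finite family disjointly and mean-preservingly into the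
  translates they can reach, so there are at least as many of those. For infinitely many cosets,
  Hall's theorem follows from the finite case by compactness of a product of finite discrete
  spaces. Hence \<open>G\<close> and \<open>G/H\<close> admit paradoxical decompositions with exactly the same \<open>(m, n)\<close>.
\<close>

section \<open>Hall's marriage theorem\<close>

definition Hall_condition :: "'l set \<Rightarrow> ('l \<Rightarrow> 'r set) \<Rightarrow> bool" where
  "Hall_condition L N \<longleftrightarrow> (\<forall>A\<subseteq>L. finite A \<longrightarrow> card A \<le> card (\<Union>(N ` A)))"

lemma Hall_condition_subset: "Hall_condition L N \<Longrightarrow> L' \<subseteq> L \<Longrightarrow> Hall_condition L' N"
  unfolding Hall_condition_def by blast

lemma Hall_condition_Diff_tight:
  assumes hall: "Hall_condition L N" and A: "A \<subseteq> L" "finite A"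
    and tight: "card (\<Union>(N ` A)) \<le> card A"
  shows "Hall_condition (L - A) (\<lambda>a. N a - \<Union>(N ` A))"
  unfolding Hall_condition_def
proof (intro allI impI)
  fix B assume B: "B \<subseteq> L - A" "finite B"
  let ?X = "\<Union>(N ` A)"
  have "A \<union> B \<subseteq> L" "finite (A \<union> B)" using A B by auto
  then have "card (A \<union> B) \<le> card (\<Union>(N ` (A \<union> B)))"
    using hall unfolding Hall_condition_def by blast
  moreover have "A \<inter> B = {}" using B(1) by blast
  then have "card (A \<union> B) = card A + card B" using A(2) B(2) by (rule card_Un_disjoint[rotated 2])
  moreover have "\<Union>(N ` (A \<union> B)) = ?X \<union> (\<Union>a\<in>B. N a - ?X)" by blast
  then have "card (\<Union>(N ` (A \<union> B))) \<le> card ?X + card (\<Union>a\<in>B. N a - ?X)"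
    by (simp only: card_Un_le)
  ultimately show "card B \<le> card (\<Union>((\<lambda>a. N a - ?X) ` B))" using tight by linarith
qed

lemma Hall_condition_Diff_surplus:
  assumes a: "a \<in> L"
    and surplus: "\<And>A. A \<subseteq> L \<Longrightarrow> A \<noteq> {} \<Longrightarrow> A \<noteq> L \<Longrightarrow> card A < card (\<Union>(N ` A))"
  shows "Hall_condition (L - {a}) (\<lambda>x. N x - {y})"
  unfolding Hall_condition_def
proof (intro allI impI)
  fix B assume B: "B \<subseteq> L - {a}"
  show "card B \<le> card (\<Union>((\<lambda>x. N x - {y}) ` B))"
  proof (cases "B = {}")
    case False
    have "card (\<Union>(N ` B)) - 1 \<le> card (\<Union>(N ` B) - {y})"
      by (simp add: card_Diff_singleton_if)
    moreover have "card B < card (\<Union>(N ` B))" using surplus[of B] B a False by blast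
    moreover have "\<Union>((\<lambda>x. N x - {y}) ` B) = \<Union>(N ` B) - {y}" by blast
    ultimately show ?thesis by simp
  qed simp
qed

lemma Hall_condition_nonempty:
  assumes "Hall_condition L N" "a \<in> L"
  shows "N a \<noteq> {}"
proof -
  have "card {a} \<le> card (\<Union>(N ` {a}))"
    using assms unfolding Hall_condition_def by blast
  then show ?thesis by auto
qed

lemma distinct_representatives_Un:
  assumes A: "A \<subseteq> L"
    and f1: "\<forall>a\<in>A. f1 a \<in> N a" "inj_on f1 A"
    and f2: "\<forall>a\<in>L - A. f2 a \<in> N a - \<Union>(N ` A)" "inj_on f2 (L - A)"
  shows "\<exists>f. (\<forall>a\<in>L. f a \<in> N a) \<and> inj_on f L"
proof -
  define f where "f a = (if a \<in> A then f1 a else f2 a)" for a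
  have "inj_on f A" "inj_on f (L - A)"
    using f1(2) f2(2) unfolding f_def inj_on_def by simp_all
  moreover have "f ` A \<subseteq> \<Union>(N ` A)" "f ` (L - A) \<inter> \<Union>(N ` A) = {}"
    using f1(1) f2(1) unfolding f_def by auto
  ultimately have "inj_on f (A \<union> (L - A))" unfolding inj_on_Un by blast
  moreover have "A \<union> (L - A) = L" using A by blast
  moreover have "\<forall>a\<in>L. f a \<in> N a" using f1(1) f2(1) unfolding f_def by simp
  ultimately show ?thesis by auto
qed

lemma distinct_representatives_insert:
  assumes a: "a \<in> L" and y: "y \<in> N a"
    and f: "\<forall>x\<in>L - {a}. f x \<in> N x - {y}" "inj_on f (L - {a})"
  shows "\<exists>f. (\<forall>a\<in>L. f a \<in> N a) \<and> inj_on f L"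
proof -
  have "y \<notin> f ` (L - {a})" using f(1) by blast
  then have "inj_on (f(a := y)) (insert a (L - {a}))"
    unfolding inj_on_insert using inj_on_fun_updI[OF f(2)] by simp
  then have "inj_on (f(a := y)) L" by (simp only: insert_Diff[OF a])
  then show ?thesis using f(1) y by (intro exI[of _ "f(a := y)"]) auto
qed

theorem finite_Hall:
  assumes "finite L" "Hall_condition L N"
  shows "\<exists>f. (\<forall>a\<in>L. f a \<in> N a) \<and> inj_on f L"
  using assms
proof (induction "card L" arbitrary: L N rule: less_induct)
  case less
  note fin = less.prems(1) and hall = less.prems(2)
  show ?case
  proof (cases "\<exists>A. A \<subseteq> L \<and> A \<noteq> {} \<and> A \<noteq> L \<and> card (\<Union>(N ` A)) \<le> card A")
    case True
    then obtain A where A: "A \<subseteq> L" "A \<noteq> {}" "A \<noteq> L" and tight: "card (\<Union>(N ` A)) \<le> card A"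
      by blast
    have finA: "finite A" using A(1) fin by (rule finite_subset)
    have "card A < card L" using psubset_card_mono[OF fin] A(1,3) by blast
    moreover have "card (L - A) < card L"
    proof -
      have "0 < card A" using finA A(2) by (simp add: card_gt_0_iff)
      moreover have "0 < card L" using \<open>card A < card L\<close> by simp
      ultimately show ?thesis using card_Diff_subset[OF finA A(1)] by (simp add: diff_less)
    qed
    ultimately obtain f1 f2
      where f1: "\<forall>a\<in>A. f1 a \<in> N a" "inj_on f1 A"
        and f2: "\<forall>a\<in>L - A. f2 a \<in> N a - \<Union>(N ` A)" "inj_on f2 (L - A)"
      using less.hyps[of A N] less.hyps[of "L - A" "\<lambda>a. N a - \<Union>(N ` A)"] finA fin
        Hall_condition_subset[OF hall A(1)] Hall_condition_Diff_tight[OF hall A(1) finA tight]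
      by blast
    show ?thesis by (rule distinct_representatives_Un[OF A(1) f1 f2])
  next
    case False
    then have surplus: "\<And>A. A \<subseteq> L \<Longrightarrow> A \<noteq> {} \<Longrightarrow> A \<noteq> L \<Longrightarrow> card A < card (\<Union>(N ` A))"
      by (meson not_le)
    show ?thesis
    proof (cases "L = {}")
      case False
      then obtain a where a: "a \<in> L" by blast
      obtain y where y: "y \<in> N a" using Hall_condition_nonempty[OF hall a] by blast
      have "card (L - {a}) < card L" using fin a by (rule card_Diff1_less)
      then obtain f where f: "\<forall>x\<in>L - {a}. f x \<in> N x - {y}" "inj_on f (L - {a})"
        using less.hyps[of "L - {a}" "\<lambda>x. N x - {y}"] fin Hall_condition_Diff_surplus[OF a surplus]
        by blast
      show ?thesis by (rule distinct_representatives_insert[OF a y f])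
    qed simp
  qed
qed

lemma PiE_inj_on_finite_subset:
  assumes hall: "Hall_condition L N" and A: "finite A" "A \<subseteq> L"
  shows "\<exists>f\<in>(\<Pi>\<^sub>E a\<in>L. N a). inj_on f A"
proof -
  obtain g where g: "\<forall>a\<in>A. g a \<in> N a" "inj_on g A"
    using finite_Hall[of A N] A Hall_condition_subset[OF hall A(2)] by blast
  define f where "f a = (if a \<in> A then g a else if a \<in> L then (SOME y. y \<in> N a) else undefined)" for a
  have "f a \<in> N a" if "a \<in> L" for a
    using g(1) some_in_eq[of "N a"] Hall_condition_nonempty[OF hall that] that unfolding f_def by auto
  moreover have "f a = undefined" if "a \<notin> L" for a
    using that A(2) unfolding f_def by auto
  moreover have "inj_on f A"
    using g(2) by (rule inj_on_cong[THEN iffD2, rotated]) (simp add: f_def)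
  ultimately show ?thesis by (intro bexI[of _ f]) (auto simp: PiE_iff extensional_def)
qed

lemma closedin_product_discrete_neq:
  assumes "a \<in> L" "b \<in> L"
  shows "closedin (product_topology (\<lambda>a. discrete_topology (N a)) L)
    {f \<in> topspace (product_topology (\<lambda>a. discrete_topology (N a)) L). f a \<noteq> f b}"
    (is "closedin ?X ?S")
proof -
  define S where "S c u = {f \<in> topspace ?X. f c \<in> {u} \<inter> N c}" for c u
  have "openin ?X (S c u)" if "c \<in> L" for c u
    unfolding S_def
    by (rule openin_continuous_map_preimage[OF continuous_map_product_projection[OF that]]) simp
  then have "openin ?X (\<Union>u\<in>N a. S a u \<inter> S b u)"
    using assms by (intro openin_Union) auto
  moreover have "f c \<in> N c" if "f \<in> topspace ?X" "c \<in> L" for f c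
    using that by (simp add: PiE_mem)
  then have "topspace ?X - ?S = (\<Union>u\<in>N a. S a u \<inter> S b u)"
    unfolding S_def using assms by auto
  ultimately show ?thesis unfolding closedin_def by auto
qed

theorem Hall:
  assumes fin: "\<forall>a\<in>L. finite (N a)" and hall: "Hall_condition L N"
  shows "\<exists>f. (\<forall>a\<in>L. f a \<in> N a) \<and> inj_on f L"
proof -
  define Y where "Y = product_topology (\<lambda>a. discrete_topology (N a)) L"
  define D where "D p = {f \<in> topspace Y. f (fst p) \<noteq> f (snd p)}" for p
  define P where "P = {(a, b). a \<in> L \<and> b \<in> L \<and> a \<noteq> b}"
  have top: "topspace Y = (\<Pi>\<^sub>E a\<in>L. N a)" unfolding Y_def by simp
  have "compact_space Y"
    unfolding Y_def using fin by (simp add: compact_space_product_topology compact_space_discrete_topology)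
  moreover have "closedin Y (D p)" if "p \<in> P" for p
  proof -
    have "fst p \<in> L" "snd p \<in> L" using that unfolding P_def by auto
    then show ?thesis unfolding D_def Y_def by (rule closedin_product_discrete_neq)
  qed
  then have "\<forall>C\<in>insert (topspace Y) (D ` P). closedin Y C" by blast
  moreover have "\<Inter>\<F> \<noteq> {}" if \<F>: "finite \<F>" "\<F> \<subseteq> insert (topspace Y) (D ` P)" for \<F>
  proof -
    have "finite (\<F> - {topspace Y})" "\<F> - {topspace Y} \<subseteq> D ` P" using \<F> by auto
    then obtain P0 where P0: "P0 \<subseteq> P" "finite P0" "\<F> - {topspace Y} = D ` P0"
      by (meson finite_subset_image)
    then have \<F>_P0: "\<F> \<subseteq> insert (topspace Y) (D ` P0)" by blast
    define A where "A = fst ` P0 \<union> snd ` P0"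
    have "finite A" "A \<subseteq> L" using P0 unfolding A_def P_def by auto
    then obtain f where f: "f \<in> topspace Y" "inj_on f A"
      using PiE_inj_on_finite_subset[OF hall] top by blast
    have "f \<in> D p" if "p \<in> P0" for p
      using that f P0(1) inj_onD[OF f(2), of "fst p" "snd p"] unfolding D_def A_def P_def by auto
    then have "f \<in> \<Inter>\<F>" using \<F>_P0 f(1) by blast
    then show ?thesis by blast
  qed
  ultimately obtain f where f: "f \<in> \<Inter>(insert (topspace Y) (D ` P))"
    unfolding compact_space_fip by (metis ex_in_conv)
  then have "\<forall>a\<in>L. f a \<in> N a" using top by (auto simp: PiE_iff)
  moreover have "inj_on f L"
    using f unfolding D_def P_def inj_on_def by auto
  ultimately show ?thesis by blast
qed

section \<open>Invariant means on the cosets of a subgroup\<close>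

locale subgroup_invariant_mean = subgroup H G + group G
  for H :: "'a set" and G :: "('a, 'b) monoid_scheme" (structure) +
  fixes \<mu> :: "'a set \<Rightarrow> real"
  assumes mean_nonneg: "A \<subseteq> H \<Longrightarrow> 0 \<le> \<mu> A"
    and mean_subgroup: "\<mu> H = 1"
    and mean_Un: "A \<subseteq> H \<Longrightarrow> B \<subseteq> H \<Longrightarrow> A \<inter> B = {} \<Longrightarrow> \<mu> (A \<union> B) = \<mu> A + \<mu> B"
    and mean_r_coset: "h \<in> H \<Longrightarrow> A \<subseteq> H \<Longrightarrow> \<mu> (A #> h) = \<mu> A"
begin

lemma r_coset_image: "S #> t = (\<lambda>x. x \<otimes> t) ` S"
  unfolding r_coset_def by auto

lemma rcosets_eq_r_coset:
  assumes "C \<in> rcosets H" "c \<in> C"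
  shows "C = H #> c" "c \<in> carrier G"
proof -
  obtain r where r: "r \<in> carrier G" "C = H #> r" using assms(1) unfolding RCOSETS_def by auto
  then show "C = H #> c" using assms(2) repr_independence subgroup_axioms by blast
  show "c \<in> carrier G" using r assms(2) elemrcos_carrier[OF is_group] by blast
qed

lemma r_coset_inv_subset:
  assumes "C \<in> rcosets H" "c \<in> C" "S \<subseteq> C"
  shows "S #> inv c \<subseteq> H"
  using assms rcosets_eq_r_coset[OF assms(1,2)] rcos_module_imp[OF is_group]
  unfolding r_coset_image by auto

lemma rcosets_r_coset: "C \<in> rcosets H \<Longrightarrow> t \<in> carrier G \<Longrightarrow> C #> t \<in> rcosets H"
  unfolding RCOSETS_def using coset_mult_assoc subset by auto

lemma rcosets_nonempty: "C \<in> rcosets H \<Longrightarrow> \<exists>c. c \<in> C"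
  unfolding RCOSETS_def using rcos_self subgroup_axioms by blast

lemma mean_empty: "\<mu> {} = 0"
  using mean_Un[of "{}" "{}"] by simp

text \<open>The mean of \<open>H\<close> transported to the coset \<open>C\<close>; by right invariance the chosen representative
  does not matter.\<close>

definition coset_mean :: "'a set \<Rightarrow> 'a set \<Rightarrow> real" where
  "coset_mean C S = \<mu> (S #> inv (SOME c. c \<in> C))"

lemma coset_mean_eq:
  assumes C: "C \<in> rcosets H" and c: "c \<in> C" and S: "S \<subseteq> C"
  shows "coset_mean C S = \<mu> (S #> inv c)"
proof -
  define r where "r = (SOME c. c \<in> C)"
  have r: "r \<in> C" unfolding r_def using c by (rule someI)
  have carrier: "r \<in> carrier G" "c \<in> carrier G" "S \<subseteq> carrier G"
    using rcosets_eq_r_coset[OF C] r c S by blast+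
  have "r \<otimes> inv c \<in> H"
    using r rcosets_eq_r_coset[OF C c] rcos_module_imp[OF is_group] by auto
  then have "\<mu> ((S #> inv r) #> (r \<otimes> inv c)) = \<mu> (S #> inv r)"
    using mean_r_coset r_coset_inv_subset[OF C r S] by blast
  moreover have "(S #> inv r) #> (r \<otimes> inv c) = S #> inv c"
    using carrier by (simp add: coset_mult_assoc m_assoc[symmetric])
  ultimately show ?thesis unfolding coset_mean_def r_def[symmetric] by simp
qed

lemma coset_mean_self:
  assumes C: "C \<in> rcosets H"
  shows "coset_mean C C = 1"
proof -
  obtain c where c: "c \<in> C" using rcosets_nonempty[OF C] by blast
  have "C #> inv c = H"
    using rcosets_eq_r_coset[OF C c] subset by (simp add: coset_mult_assoc)
  then show ?thesis using coset_mean_eq[OF C c order_refl] mean_subgroup by simp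
qed

lemma coset_mean_nonneg:
  assumes "C \<in> rcosets H" "S \<subseteq> C"
  shows "0 \<le> coset_mean C S"
proof -
  obtain c where c: "c \<in> C" using rcosets_nonempty[OF assms(1)] by blast
  show ?thesis
    using coset_mean_eq[OF assms(1) c assms(2)] mean_nonneg r_coset_inv_subset[OF assms(1) c assms(2)]
    by simp
qed

lemma coset_mean_Un:
  assumes C: "C \<in> rcosets H" and S: "S \<subseteq> C" "S' \<subseteq> C" "S \<inter> S' = {}"
  shows "coset_mean C (S \<union> S') = coset_mean C S + coset_mean C S'"
proof -
  obtain c where c: "c \<in> C" using rcosets_nonempty[OF C] by blast
  have "(S \<union> S') #> inv c = (S #> inv c) \<union> (S' #> inv c)" unfolding r_coset_image by auto
  moreover have "(S #> inv c) \<inter> (S' #> inv c) = {}"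
    using S rcosets_eq_r_coset[OF C] c unfolding r_coset_image by (auto simp: subset_iff)
  ultimately show ?thesis
    using coset_mean_eq[OF C c] mean_Un r_coset_inv_subset[OF C c] S by simp
qed

lemma coset_mean_r_coset:
  assumes C: "C \<in> rcosets H" and S: "S \<subseteq> C" and t: "t \<in> carrier G"
  shows "coset_mean (C #> t) (S #> t) = coset_mean C S"
proof -
  obtain c where c: "c \<in> C" using rcosets_nonempty[OF C] by blast
  have carrier: "c \<in> carrier G" "S \<subseteq> carrier G" using rcosets_eq_r_coset[OF C] c S by blast+
  have "c \<otimes> t \<in> C #> t" using c unfolding r_coset_image by blast
  moreover have "S #> t \<subseteq> C #> t" using S unfolding r_coset_image by blast
  moreover have "(S #> t) #> inv (c \<otimes> t) = S #> inv c"
    using carrier t by (simp add: coset_mult_assoc inv_mult_group m_assoc[symmetric])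
  ultimately show ?thesis
    using coset_mean_eq[OF rcosets_r_coset[OF C t]] coset_mean_eq[OF C c S] by simp
qed

definition cosets_mean :: "'a set set \<Rightarrow> 'a set \<Rightarrow> real" where
  "cosets_mean R S = (\<Sum>D\<in>R. coset_mean D (S \<inter> D))"

lemma cosets_mean_Un:
  assumes R: "R \<subseteq> rcosets H" and disj: "S \<inter> S' = {}"
  shows "cosets_mean R (S \<union> S') = cosets_mean R S + cosets_mean R S'"
proof -
  have "coset_mean D ((S \<union> S') \<inter> D) = coset_mean D (S \<inter> D) + coset_mean D (S' \<inter> D)" if "D \<in> R" for D
    using coset_mean_Un[of D "S \<inter> D" "S' \<inter> D"] that R disj by (auto simp: Int_Un_distrib2)
  then show ?thesis unfolding cosets_mean_def by (simp add: sum.distrib)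
qed

lemma cosets_mean_mono:
  assumes R: "R \<subseteq> rcosets H" and "S \<subseteq> S'"
  shows "cosets_mean R S \<le> cosets_mean R S'"
proof -
  have "cosets_mean R S' = cosets_mean R S + cosets_mean R (S' - S)"
    using cosets_mean_Un[OF R, of S "S' - S"] assms(2) by (simp add: Un_absorb1)
  moreover have "0 \<le> cosets_mean R (S' - S)"
    unfolding cosets_mean_def using R by (intro sum_nonneg) (auto intro: coset_mean_nonneg)
  ultimately show ?thesis by simp
qed

lemma cosets_mean_UN:
  assumes R: "R \<subseteq> rcosets H" and I: "finite I" and disj: "disjoint_family_on E I"
  shows "cosets_mean R (\<Union>i\<in>I. E i) = (\<Sum>i\<in>I. cosets_mean R (E i))"
  using I disj
proof (induction I rule: finite_induct)
  case empty
  then show ?case unfolding cosets_mean_def coset_mean_def by (simp add: r_coset_image mean_empty)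
next
  case (insert i I)
  then have "E i \<inter> (\<Union>j\<in>I. E j) = {}" "disjoint_family_on E I"
    by (auto simp: disjoint_family_on_def)
  then show ?case using insert cosets_mean_Un[OF R] by simp
qed

lemma cosets_mean_Union:
  assumes "R \<subseteq> rcosets H"
  shows "cosets_mean R (\<Union>R) = card R"
proof -
  have "coset_mean D (\<Union>R \<inter> D) = 1" if "D \<in> R" for D
  proof -
    have "\<Union>R \<inter> D = D" using that by blast
    then show ?thesis using that assms coset_mean_self by auto
  qed
  then show ?thesis unfolding cosets_mean_def by simp
qed

lemma cosets_mean_subset_coset:
  assumes R: "R \<subseteq> rcosets H" "finite R" and D: "D \<in> R" and S: "S \<subseteq> D"
  shows "cosets_mean R S = coset_mean D S"
proof -
  have "S \<inter> D' = {}" if "D' \<in> R - {D}" for D'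
    using rcos_disjoint[OF subgroup_axioms] that R D S unfolding pairwise_def disjnt_def by blast
  then have "coset_mean D' (S \<inter> D') = 0" if "D' \<in> R - {D}" for D'
    using that unfolding coset_mean_def by (simp add: r_coset_image mean_empty)
  moreover have "cosets_mean R S = coset_mean D (S \<inter> D) + (\<Sum>D'\<in>R - {D}. coset_mean D' (S \<inter> D'))"
    unfolding cosets_mean_def using R(2) D by (rule sum.remove)
  ultimately show ?thesis using S by (simp add: Int_absorb2)
qed

lemma cosets_mean_translated_image:
  assumes R: "R \<subseteq> rcosets H" "finite R" and C: "C \<in> rcosets H"
    and T: "finite T" "T \<subseteq> carrier G" "\<forall>t\<in>T. C #> t \<in> R"
    and S: "S \<subseteq> C" and translation: "\<forall>x\<in>S. \<exists>t\<in>T. f x = x \<otimes> t" and inj: "inj_on f S"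
  shows "cosets_mean R (f ` S) = coset_mean C S"
  using T S translation inj
proof (induction T arbitrary: S rule: finite_induct)
  case empty
  then show ?case unfolding cosets_mean_def coset_mean_def by (simp add: r_coset_image mean_empty)
next
  case (insert t T S)
  note S = insert.prems(3) and translation = insert.prems(4) and inj = insert.prems(5)
  define S1 where "S1 = {x \<in> S. f x = x \<otimes> t}"
  define S2 where "S2 = S - S1"
  have t: "t \<in> carrier G" "C #> t \<in> R" using insert.prems(1,2) by auto
  have S12: "S = S1 \<union> S2" "S1 \<inter> S2 = {}" "S1 \<subseteq> C" "S2 \<subseteq> C"
    using S unfolding S1_def S2_def by auto
  have "f ` S1 = S1 #> t" unfolding r_coset_image S1_def by auto
  moreover have "S1 #> t \<subseteq> C #> t" using S12(3) unfolding r_coset_image by auto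
  ultimately have "cosets_mean R (f ` S1) = coset_mean C S1"
    using cosets_mean_subset_coset[OF R t(2)] coset_mean_r_coset[OF C S12(3) t(1)] by simp
  moreover have "cosets_mean R (f ` S2) = coset_mean C S2"
  proof (rule insert.IH)
    show "T \<subseteq> carrier G" "\<forall>t\<in>T. C #> t \<in> R" using insert.prems(1,2) by auto
    show "\<forall>x\<in>S2. \<exists>t\<in>T. f x = x \<otimes> t" using translation unfolding S2_def S1_def by auto
    show "inj_on f S2" using inj by (rule inj_on_subset) (simp add: S2_def)
  qed (use S12 in simp)
  moreover have "f ` S1 \<inter> f ` S2 = {}"
    using inj_on_image_Int[OF inj, of S1 S2] S12 by simp
  ultimately show ?case
    using cosets_mean_Un[OF R(1)] coset_mean_Un[OF C S12(3,4,2)] S12(1) by (simp add: image_Un)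
qed

text \<open>Each \<open>f a\<close> maps the coset \<open>C a\<close>, of mean 1, mean-preservingly into the translates
  \<open>C a #> t\<close>; the images are disjoint, so the \<open>card I\<close> of them fit into \<open>card R\<close> cosets.\<close>

lemma card_le_card_translated_cosets:
  fixes I :: "'i set" and C :: "'i \<Rightarrow> 'a set"
  assumes I: "finite I" and C: "\<forall>a\<in>I. C a \<in> rcosets H"
    and T: "\<forall>a\<in>I. finite (T a) \<and> T a \<subseteq> carrier G"
    and f: "\<forall>a\<in>I. \<forall>x\<in>C a. \<exists>t\<in>T a. f a x = x \<otimes> t"
    and inj: "inj_on (case_prod f) (Sigma I C)"
  shows "card I \<le> card (\<Union>a\<in>I. (\<lambda>t. C a #> t) ` T a)"
proof -
  define R where "R = (\<Union>a\<in>I. (\<lambda>t. C a #> t) ` T a)"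
  have R: "R \<subseteq> rcosets H" "finite R"
    unfolding R_def using I C T by (auto intro!: rcosets_r_coset)
  have inj_pair: "a = b \<and> x = y" if "a \<in> I" "x \<in> C a" "b \<in> I" "y \<in> C b" "f a x = f b y" for a b x y
    using inj_onD[OF inj, of "(a, x)" "(b, y)"] that by simp
  have "cosets_mean R (f a ` C a) = 1" if a: "a \<in> I" for a
  proof -
    have "inj_on (f a) (C a)" using inj_pair a by (intro inj_onI) blast
    moreover have "\<forall>t\<in>T a. C a #> t \<in> R" unfolding R_def using a by blast
    ultimately have "cosets_mean R (f a ` C a) = coset_mean (C a) (C a)"
      using C T f a by (intro cosets_mean_translated_image[OF R]) auto
    then show ?thesis using coset_mean_self C a by simp
  qed
  then have "card I = (\<Sum>a\<in>I. cosets_mean R (f a ` C a))" by simp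
  also have "\<dots> = cosets_mean R (\<Union>a\<in>I. f a ` C a)"
  proof (rule cosets_mean_UN[OF R(1) I, symmetric])
    show "disjoint_family_on (\<lambda>a. f a ` C a) I"
      unfolding disjoint_family_on_def using inj_pair by blast
  qed
  also have "\<dots> \<le> cosets_mean R (\<Union>R)"
  proof (rule cosets_mean_mono[OF R(1)], clarify)
    fix a x assume "a \<in> I" "x \<in> C a"
    then obtain t where "t \<in> T a" "f a x = x \<otimes> t" using f by blast
    then show "f a x \<in> \<Union>R" using \<open>a \<in> I\<close> \<open>x \<in> C a\<close> unfolding R_def r_coset_image by blast
  qed
  also have "\<dots> = card R" using cosets_mean_Union[OF R(1)] .
  finally show ?thesis unfolding R_def by simp
qed

end

section \<open>Paradoxical decompositions as injections\<close>

lemma paradoxical_decomposition_iff_covers: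
  "paradoxical_decomposition K m n \<longleftrightarrow> 0 < m \<and> 0 < n \<and>
    (\<exists>(P :: bool \<Rightarrow> nat \<Rightarrow> 'a set) k.
      (\<forall>b. \<forall>i\<in>{..< if b then m else n}. P b i \<subseteq> carrier K \<and> k b i \<in> carrier K) \<and>
      disjoint_family_on (case_prod P) (SIGMA b:UNIV. {..< if b then m else n}) \<and>
      (\<forall>b. carrier K = (\<Union>i\<in>{..< if b then m else n}. P b i #>\<^bsub>K\<^esub> k b i)))"
  (is "_ \<longleftrightarrow> _ \<and> _ \<and> (\<exists>P k. ?pieces P k \<and> ?disjoint P \<and> ?covers P k)")
proof
  assume "paradoxical_decomposition K m n"
  then obtain P Q g h where mn: "0 < m" "0 < n"
    and "\<forall>i<m. P i \<subseteq> carrier K \<and> g i \<in> carrier K" "\<forall>j<n. Q j \<subseteq> carrier K \<and> h j \<in> carrier K"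
    and dP: "\<forall>i<m. \<forall>i'<m. i \<noteq> i' \<longrightarrow> P i \<inter> P i' = {}"
    and dQ: "\<forall>j<n. \<forall>j'<n. j \<noteq> j' \<longrightarrow> Q j \<inter> Q j' = {}"
    and dPQ: "\<forall>i<m. \<forall>j<n. P i \<inter> Q j = {}"
    and "carrier K = (\<Union>i<m. P i #>\<^bsub>K\<^esub> g i)" "carrier K = (\<Union>j<n. Q j #>\<^bsub>K\<^esub> h j)"
    unfolding paradoxical_decomposition_def by (elim conjE exE) (rule that)
  moreover define P' where "P' b = (if b then P else Q)" for b
  moreover define k where "k b = (if b then g else h)" for b
  ultimately have "?pieces P' k" "?covers P' k" by simp_all
  moreover have "P' b i \<inter> P' b' j = {}"
    if "i < (if b then m else n)" "j < (if b' then m else n)" "(b, i) \<noteq> (b', j)" for b i b' j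
    using that dP dQ dPQ unfolding P'_def by (cases b; cases b') (simp_all add: inf_commute)
  then have "?disjoint P'" unfolding disjoint_family_on_def by auto
  ultimately show "0 < m \<and> 0 < n \<and> (\<exists>P k. ?pieces P k \<and> ?disjoint P \<and> ?covers P k)"
    using mn by blast
next
  assume "0 < m \<and> 0 < n \<and> (\<exists>P k. ?pieces P k \<and> ?disjoint P \<and> ?covers P k)"
  then obtain P k where mn: "0 < m" "0 < n" and pieces: "?pieces P k" and covers: "?covers P k"
    and disj: "?disjoint P" by blast
  have D: "P b i \<inter> P b' j = {}"
    if "i < (if b then m else n)" "j < (if b' then m else n)" "(b, i) \<noteq> (b', j)" for b i b' j
    using disjoint_family_onD[OF disj, of "(b, i)" "(b', j)"] that by simp
  have "\<forall>i<m. \<forall>i'<m. i \<noteq> i' \<longrightarrow> P True i \<inter> P True i' = {}"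
    "\<forall>j<n. \<forall>j'<n. j \<noteq> j' \<longrightarrow> P False j \<inter> P False j' = {}"
    "\<forall>i<m. \<forall>j<n. P True i \<inter> P False j = {}"
    using D[of _ True _ True] D[of _ False _ False] D[of _ True _ False] by auto
  moreover have "\<forall>i<m. P True i \<subseteq> carrier K \<and> k True i \<in> carrier K"
    "\<forall>j<n. P False j \<subseteq> carrier K \<and> k False j \<in> carrier K"
    using spec[OF pieces, of True] spec[OF pieces, of False] by simp_all
  moreover have "carrier K = (\<Union>i<m. P True i #>\<^bsub>K\<^esub> k True i)"
    "carrier K = (\<Union>j<n. P False j #>\<^bsub>K\<^esub> k False j)"
    using spec[OF covers, of True] spec[OF covers, of False] by simp_all
  ultimately show "paradoxical_decomposition K m n"
    unfolding paradoxical_decomposition_def using mn by blast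
qed

lemma (in group) injection_of_disjoint_covers:
  fixes J :: "'c \<Rightarrow> 'i set" and P :: "'c \<Rightarrow> 'i \<Rightarrow> 'a set"
  assumes P: "\<forall>b. \<forall>i\<in>J b. P b i \<subseteq> carrier G \<and> k b i \<in> carrier G"
    and disj: "disjoint_family_on (case_prod P) (Sigma UNIV J)"
    and cover: "\<forall>b. carrier G \<subseteq> (\<Union>i\<in>J b. P b i #> k b i)"
  shows "\<exists>F. (\<forall>b. \<forall>x\<in>carrier G. \<exists>i\<in>J b. F b x = x \<otimes> inv k b i)
    \<and> inj_on (case_prod F) (UNIV \<times> carrier G)"
proof -
  define \<iota> where "\<iota> b x = (SOME i. i \<in> J b \<and> x \<otimes> inv k b i \<in> P b i)" for b x
  have \<iota>: "\<iota> b x \<in> J b \<and> x \<otimes> inv k b (\<iota> b x) \<in> P b (\<iota> b x)" if x: "x \<in> carrier G" for b x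
  proof -
    obtain i p where i: "i \<in> J b" "p \<in> P b i" "x = p \<otimes> k b i"
      using x cover unfolding r_coset_def by blast
    moreover have "p \<in> carrier G" "k b i \<in> carrier G" using P i by blast+
    ultimately have "\<exists>i. i \<in> J b \<and> x \<otimes> inv k b i \<in> P b i" using i by (auto simp: m_assoc)
    then show ?thesis unfolding \<iota>_def by (rule someI_ex)
  qed
  define F where "F b x = x \<otimes> inv k b (\<iota> b x)" for b x
  have inj: "inj_on (case_prod F) (UNIV \<times> carrier G)"
  proof (rule inj_onI, clarify)
    fix b x b' y assume x: "x \<in> carrier G" and y: "y \<in> carrier G" and eq: "F b x = F b' y"
    have "F b x \<in> P b (\<iota> b x)" "F b' y \<in> P b' (\<iota> b' y)"
      using \<iota>[OF x] \<iota>[OF y] unfolding F_def by blast+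
    then have "F b x \<in> P b (\<iota> b x) \<inter> P b' (\<iota> b' y)" using eq by simp
    then have "(b, \<iota> b x) = (b', \<iota> b' y)"
      using disjoint_family_onD[OF disj] \<iota>[OF x] \<iota>[OF y] by fastforce
    then have b: "b = b'" and i: "\<iota> b x = \<iota> b' y" by auto
    have "x \<otimes> inv k b' (\<iota> b' y) = y \<otimes> inv k b' (\<iota> b' y)" using eq unfolding F_def by (metis b i)
    moreover have "k b' (\<iota> b' y) \<in> carrier G" using P \<iota>[OF y] by blast
    ultimately show "b = b' \<and> x = y" using b x y by simp
  qed
  moreover have "\<forall>b. \<forall>x\<in>carrier G. \<exists>i\<in>J b. F b x = x \<otimes> inv k b i"
    using \<iota> unfolding F_def by blast
  ultimately show ?thesis by blast
qed

lemma (in group) disjoint_covers_of_injection: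
  fixes J :: "'c \<Rightarrow> 'i set"
  assumes k: "\<forall>b. \<forall>i\<in>J b. k b i \<in> carrier G"
    and F: "\<forall>b. \<forall>x\<in>carrier G. \<exists>i\<in>J b. F b x = x \<otimes> inv k b i"
    and inj: "inj_on (case_prod F) (UNIV \<times> carrier G)"
  shows "\<exists>P. (\<forall>b. \<forall>i\<in>J b. P b i \<subseteq> carrier G)
    \<and> disjoint_family_on (case_prod P) (Sigma UNIV J)
    \<and> (\<forall>b. carrier G = (\<Union>i\<in>J b. P b i #> k b i))"
proof -
  define \<iota> where "\<iota> b x = (SOME i. i \<in> J b \<and> F b x = x \<otimes> inv k b i)" for b x
  have \<iota>: "\<iota> b x \<in> J b \<and> F b x = x \<otimes> inv k b (\<iota> b x)" if "x \<in> carrier G" for b x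
  proof -
    have "\<exists>i. i \<in> J b \<and> F b x = x \<otimes> inv k b i" using F that by blast
    then show ?thesis unfolding \<iota>_def by (rule someI_ex)
  qed
  define P where "P b i = {F b x | x. x \<in> carrier G \<and> \<iota> b x = i}" for b i
  have "F b x \<in> carrier G" if "x \<in> carrier G" for b x
    using \<iota>[OF that] k that by (metis inv_closed m_closed)
  then have P: "\<forall>b. \<forall>i\<in>J b. P b i \<subseteq> carrier G" unfolding P_def by blast
  have "P b i \<inter> P b' j = {}" if ne: "(b, i) \<noteq> (b', j)" for b i b' j
  proof (rule ccontr)
    assume "P b i \<inter> P b' j \<noteq> {}"
    then obtain x y where "x \<in> carrier G" "y \<in> carrier G" "\<iota> b x = i" "\<iota> b' y = j" "F b x = F b' y"
      unfolding P_def by blast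
    then show False using inj_onD[OF inj, of "(b, x)" "(b', y)"] ne by auto
  qed
  then have "disjoint_family_on (case_prod P) (Sigma UNIV J)"
    unfolding disjoint_family_on_def by auto
  moreover have "carrier G = (\<Union>i\<in>J b. P b i #> k b i)" for b
  proof
    show "(\<Union>i\<in>J b. P b i #> k b i) \<subseteq> carrier G"
      using P k by (intro UN_least r_coset_subset_G) auto
    show "carrier G \<subseteq> (\<Union>i\<in>J b. P b i #> k b i)"
    proof
      fix x assume x: "x \<in> carrier G"
      then have "x = F b x \<otimes> k b (\<iota> b x)" using \<iota>[OF x] k by (simp add: m_assoc)
      moreover have "F b x \<in> P b (\<iota> b x)" unfolding P_def using x by blast
      ultimately show "x \<in> (\<Union>i\<in>J b. P b i #> k b i)"
        using \<iota>[OF x] unfolding r_coset_def by blast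
    qed
  qed
  ultimately show ?thesis using P by (intro exI[of _ P]) blast
qed

text \<open>The copy \<open>b\<close> of \<open>K\<close> is injected by \<open>F b\<close>, moving each point by one of the right translations
  \<open>inv (k b i)\<close>; \<open>b = True\<close> accounts for the \<open>m\<close> pieces \<open>P\<^sub>i\<close> and \<open>b = False\<close> for the \<open>n\<close> pieces \<open>Q\<^sub>j\<close>.\<close>

definition paradoxical_injection :: "('c, 'd) monoid_scheme \<Rightarrow> nat \<Rightarrow> nat \<Rightarrow> bool" where
  "paradoxical_injection K m n \<longleftrightarrow> 0 < m \<and> 0 < n \<and>
    (\<exists>(k :: bool \<Rightarrow> nat \<Rightarrow> 'c) (F :: bool \<Rightarrow> 'c \<Rightarrow> 'c).
      (\<forall>b. \<forall>i\<in>{..< if b then m else n}. k b i \<in> carrier K) \<and>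
      (\<forall>b. \<forall>x\<in>carrier K. \<exists>i\<in>{..< if b then m else n}. F b x = x \<otimes>\<^bsub>K\<^esub> inv\<^bsub>K\<^esub> k b i) \<and>
      inj_on (case_prod F) (UNIV \<times> carrier K))"

lemma (in group) paradoxical_decomposition_iff_injection:
  "paradoxical_decomposition G m n \<longleftrightarrow> paradoxical_injection G m n"
proof
  assume "paradoxical_decomposition G m n"
  then obtain P k where mn: "0 < m" "0 < n"
    and pieces: "\<forall>b. \<forall>i\<in>{..< if b then m else n}. P b i \<subseteq> carrier G \<and> k b i \<in> carrier G"
    and disj: "disjoint_family_on (case_prod P) (SIGMA b:UNIV. {..< if b then m else n})"
    and covers: "\<forall>b. carrier G = (\<Union>i\<in>{..< if b then m else n}. P b i #> k b i)"
    unfolding paradoxical_decomposition_iff_covers by blast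
  obtain F where "\<forall>b. \<forall>x\<in>carrier G. \<exists>i\<in>{..< if b then m else n}. F b x = x \<otimes> inv k b i"
    and "inj_on (case_prod F) (UNIV \<times> carrier G)"
    using injection_of_disjoint_covers[OF pieces disj] covers by blast
  with mn pieces show "paradoxical_injection G m n"
    unfolding paradoxical_injection_def by blast
next
  assume "paradoxical_injection G m n"
  then obtain k F where mn: "0 < m" "0 < n"
    and k: "\<forall>b. \<forall>i\<in>{..< if b then m else n}. k b i \<in> carrier G"
    and F: "\<forall>b. \<forall>x\<in>carrier G. \<exists>i\<in>{..< if b then m else n}. F b x = x \<otimes> inv k b i"
    and inj: "inj_on (case_prod F) (UNIV \<times> carrier G)"
    unfolding paradoxical_injection_def by blast
  obtain P where "\<forall>b. \<forall>i\<in>{..< if b then m else n}. P b i \<subseteq> carrier G"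
    and "disjoint_family_on (case_prod P) (SIGMA b:UNIV. {..< if b then m else n})"
    and "\<forall>b. carrier G = (\<Union>i\<in>{..< if b then m else n}. P b i #> k b i)"
    using disjoint_covers_of_injection[OF k F inj] by blast
  with mn k show "paradoxical_decomposition G m n"
    unfolding paradoxical_decomposition_iff_covers by blast
qed

section \<open>Passing to the quotient\<close>

context normal
begin

lemma FactGroup_carrier: "carrier (G Mod H) = rcosets H"
  by (simp add: FactGroup_def)

lemma FactGroup_mult_inv_r_coset:
  assumes C: "C \<in> rcosets H" and t: "t \<in> carrier G"
  shows "C \<otimes>\<^bsub>G Mod H\<^esub> inv\<^bsub>G Mod H\<^esub> (H #> t) = C #> inv t"
proof -
  obtain c where c: "c \<in> carrier G" "C = H #> c" using C unfolding RCOSETS_def by auto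
  have "inv\<^bsub>G Mod H\<^esub> (H #> t) = H #> inv t"
    using t by (simp add: inv_FactGroup rcos_inv FactGroup_carrier rcosetsI subset)
  then show ?thesis
    using c t by (simp add: rcos_sum coset_mult_assoc subset)
qed

lemma paradoxical_injection_of_FactGroup:
  assumes "paradoxical_injection (G Mod H) m n"
  shows "paradoxical_injection G m n"
proof -
  define J where "J b = {..< if b then m else n}" for b
  obtain k' F' where mn: "0 < m" "0 < n"
    and k': "\<forall>b. \<forall>i\<in>J b. k' b i \<in> rcosets H"
    and F': "\<forall>b. \<forall>C\<in>rcosets H. \<exists>i\<in>J b. F' b C = C \<otimes>\<^bsub>G Mod H\<^esub> inv\<^bsub>G Mod H\<^esub> k' b i"
    and inj: "inj_on (case_prod F') (UNIV \<times> rcosets H)"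
    using assms unfolding paradoxical_injection_def FactGroup_carrier J_def by blast
  define k where "k b i = (SOME x. x \<in> carrier G \<and> k' b i = H #> x)" for b i
  have k: "k b i \<in> carrier G \<and> k' b i = H #> k b i" if "i \<in> J b" for b i
  proof -
    have "\<exists>x. x \<in> carrier G \<and> k' b i = H #> x" using k' that unfolding RCOSETS_def by blast
    then show ?thesis unfolding k_def by (rule someI_ex)
  qed
  define \<iota> where "\<iota> b C = (SOME i. i \<in> J b \<and> F' b C = C #> inv k b i)" for b C
  have \<iota>: "\<iota> b C \<in> J b \<and> F' b C = C #> inv k b (\<iota> b C)" if C: "C \<in> rcosets H" for b C
  proof -
    obtain i where i: "i \<in> J b" "F' b C = C \<otimes>\<^bsub>G Mod H\<^esub> inv\<^bsub>G Mod H\<^esub> k' b i"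
      using F' C by blast
    then have "F' b C = C #> inv k b i" using k[OF i(1)] FactGroup_mult_inv_r_coset[OF C] by simp
    then have "\<exists>i. i \<in> J b \<and> F' b C = C #> inv k b i" using i(1) by blast
    then show ?thesis unfolding \<iota>_def by (rule someI_ex)
  qed
  define F where "F b x = x \<otimes> inv k b (\<iota> b (H #> x))" for b x
  have F_coset: "H #> F b x = F' b (H #> x)" if x: "x \<in> carrier G" for b x
    using \<iota>[OF rcosetsI[OF subset x]] k x unfolding F_def by (simp add: coset_mult_assoc subset)
  have "inj_on (case_prod F) (UNIV \<times> carrier G)"
  proof (rule inj_onI, clarify)
    fix b x b' y assume x: "x \<in> carrier G" and y: "y \<in> carrier G" and eq: "F b x = F b' y"
    then have "F' b (H #> x) = F' b' (H #> y)" using F_coset by metis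
    moreover have "H #> x \<in> rcosets H" "H #> y \<in> rcosets H"
      using x y by (simp_all add: rcosetsI subset)
    ultimately have b: "b = b'" and xy: "H #> x = H #> y"
      using inj_onD[OF inj, of "(b, H #> x)" "(b', H #> y)"] by simp_all
    have "k b (\<iota> b (H #> y)) \<in> carrier G" using k \<iota>[OF rcosetsI[OF subset y]] by blast
    then show "b = b' \<and> x = y" using eq x y b xy unfolding F_def by simp
  qed
  moreover have "\<forall>b. \<forall>x\<in>carrier G. \<exists>i\<in>J b. F b x = x \<otimes> inv k b i"
    using \<iota> rcosetsI[OF subset] unfolding F_def by blast
  ultimately show ?thesis using mn k unfolding paradoxical_injection_def J_def by blast
qed

end

context subgroup_invariant_mean
begin

lemma Hall_condition_translated_cosets:
  fixes J :: "'c \<Rightarrow> 'i set" and k :: "'c \<Rightarrow> 'i \<Rightarrow> 'a" and F :: "'c \<Rightarrow> 'a \<Rightarrow> 'a"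
  assumes J: "\<forall>b. finite (J b)" and k: "\<forall>b. \<forall>i\<in>J b. k b i \<in> carrier G"
    and F: "\<forall>b. \<forall>x\<in>carrier G. \<exists>i\<in>J b. F b x = x \<otimes> inv k b i"
    and inj: "inj_on (case_prod F) (UNIV \<times> carrier G)"
  shows "Hall_condition (UNIV \<times> rcosets H) (\<lambda>(b, C). (\<lambda>i. C #> inv k b i) ` J b)"
  unfolding Hall_condition_def
proof (intro allI impI)
  fix A :: "('c \<times> 'a set) set" assume A: "A \<subseteq> UNIV \<times> rcosets H" "finite A"
  have Cs: "\<forall>a\<in>A. snd a \<in> rcosets H" using A(1) by auto
  have Ts: "\<forall>a\<in>A. finite ((\<lambda>i. inv k (fst a) i) ` J (fst a)) \<and> (\<lambda>i. inv k (fst a) i) ` J (fst a) \<subseteq> carrier G"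
    using J k by auto
  have fs: "\<forall>a\<in>A. \<forall>x\<in>snd a. \<exists>t\<in>(\<lambda>i. inv k (fst a) i) ` J (fst a). F (fst a) x = x \<otimes> t"
    using F A(1) rcosets_eq_r_coset by fastforce
  have injs: "inj_on (\<lambda>(a, x). F (fst a) x) (Sigma A snd)"
  proof (rule inj_onI)
    fix p q assume p: "p \<in> Sigma A snd" and q: "q \<in> Sigma A snd"
      and eq: "(\<lambda>(a, x). F (fst a) x) p = (\<lambda>(a, x). F (fst a) x) q"
    obtain b C x b' C' y where pq: "p = ((b, C), x)" "q = ((b', C'), y)" by (metis prod.collapse)
    then have C: "C \<in> rcosets H" "C' \<in> rcosets H" and xy: "x \<in> C" "y \<in> C'"
      using p q A(1) by auto
    then have "x \<in> carrier G" "y \<in> carrier G" using rcosets_eq_r_coset by auto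
    then have "b = b' \<and> x = y" using inj_onD[OF inj, of "(b, x)" "(b', y)"] eq pq by simp
    moreover have "C = C'" if "x = y"
      using rcos_disjoint[OF subgroup_axioms] C xy that unfolding pairwise_def disjnt_def by blast
    ultimately show "p = q" using pq by simp
  qed
  have "card A \<le> card (\<Union>a\<in>A. (\<lambda>t. snd a #> t) ` ((\<lambda>i. inv k (fst a) i) ` J (fst a)))"
    using card_le_card_translated_cosets[OF A(2) Cs Ts fs injs] .
  also have "(\<Union>a\<in>A. (\<lambda>t. snd a #> t) ` ((\<lambda>i. inv k (fst a) i) ` J (fst a)))
      = \<Union>((\<lambda>(b, C). (\<lambda>i. C #> inv k b i) ` J b) ` A)"
    by (auto simp: image_image)
  finally show "card A \<le> card (\<Union>((\<lambda>(b, C). (\<lambda>i. C #> inv k b i) ` J b) ` A))" .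
qed

lemma paradoxical_injection_FactGroup:
  assumes "H \<lhd> G" and "paradoxical_injection G m n"
  shows "paradoxical_injection (G Mod H) m n"
proof -
  interpret normal H G by fact
  define J where "J b = {..< if b then m else n}" for b
  obtain k F where mn: "0 < m" "0 < n"
    and k: "\<forall>b. \<forall>i\<in>J b. k b i \<in> carrier G"
    and F: "\<forall>b. \<forall>x\<in>carrier G. \<exists>i\<in>J b. F b x = x \<otimes> inv k b i"
    and inj: "inj_on (case_prod F) (UNIV \<times> carrier G)"
    using assms(2) unfolding paradoxical_injection_def J_def by blast
  define N where "N = (\<lambda>(b, C). (\<lambda>i. C #> inv k b i) ` J b)"
  have "\<forall>b. finite (J b)" unfolding J_def by simp
  then have "Hall_condition (UNIV \<times> rcosets H) N"
    unfolding N_def using k F inj by (rule Hall_condition_translated_cosets)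
  moreover have "\<forall>a\<in>UNIV \<times> rcosets H. finite (N a)" unfolding N_def J_def by auto
  ultimately obtain f where f: "\<forall>a\<in>UNIV \<times> rcosets H. f a \<in> N a"
    and inj_f: "inj_on f (UNIV \<times> rcosets H)"
    using Hall by blast
  define k' where "k' b i = H #> k b i" for b i
  have "\<forall>b. \<forall>i\<in>J b. k' b i \<in> rcosets H"
    using k unfolding k'_def by (simp add: rcosetsI subset)
  moreover have "\<exists>i\<in>J b. f (b, C) = C \<otimes>\<^bsub>G Mod H\<^esub> inv\<^bsub>G Mod H\<^esub> k' b i"
    if C: "C \<in> rcosets H" for b C
  proof -
    have "f (b, C) \<in> N (b, C)" using f C by blast
    then obtain i where "i \<in> J b" "f (b, C) = C #> inv k b i" unfolding N_def by auto
    then show ?thesis using FactGroup_mult_inv_r_coset[OF C] k unfolding k'_def by auto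
  qed
  moreover have "inj_on (case_prod (\<lambda>b C. f (b, C))) (UNIV \<times> rcosets H)" using inj_f by simp
  ultimately show ?thesis
    using mn unfolding paradoxical_injection_def FactGroup_carrier J_def
    by (intro conjI exI[of _ k'] exI[of _ "\<lambda>b C. f (b, C)"]) auto
qed

end

theorem theorem1:
  fixes G :: "('a, 'b) monoid_scheme" and H :: "'a set"
  assumes "group G"
    and "\<not> amenable G"
    and "H \<lhd> G"
    and "amenable (G\<lparr>carrier := H\<rparr>)"
  shows "tarski_number (G Mod H) = tarski_number G"
proof -
  interpret normal H G by (rule assms(3))
  obtain \<mu> :: "'a set \<Rightarrow> real"
    where "\<forall>A\<subseteq>H. 0 \<le> \<mu> A" "\<mu> H = 1"
      and "\<forall>A B. A \<subseteq> H \<longrightarrow> B \<subseteq> H \<longrightarrow> A \<inter> B = {} \<longrightarrow> \<mu> (A \<union> B) = \<mu> A + \<mu> B"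
      and "\<forall>h\<in>H. \<forall>A\<subseteq>H. \<mu> (A #>\<^bsub>G\<^esub> h) = \<mu> A"
    using assms(4) unfolding amenable_def by auto
  then interpret subgroup_invariant_mean H G \<mu>
    by unfold_locales blast+
  have "paradoxical_decomposition (G Mod H) m n \<longleftrightarrow> paradoxical_decomposition G m n" for m n
  proof -
    have "paradoxical_decomposition (G Mod H) m n \<longleftrightarrow> paradoxical_injection (G Mod H) m n"
      by (rule group.paradoxical_decomposition_iff_injection[OF factorgroup_is_group])
    also have "\<dots> \<longleftrightarrow> paradoxical_injection G m n"
      using paradoxical_injection_of_FactGroup paradoxical_injection_FactGroup[OF assms(3)] by blast
    also have "\<dots> \<longleftrightarrow> paradoxical_decomposition G m n"
      by (rule paradoxical_decomposition_iff_injection[symmetric])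
    finally show ?thesis .
  qed
  then show ?thesis unfolding tarski_number_def by simp
qed

end
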